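(* Let $n\ge 1$, $m\ge 2$, $0\le k\le n-1$, and let $\mathcal{C}^k_{ac}$ be the class of all complete acyclic $k$-bounded CP-nets over $n$ variables of domain size $m$, over the instance space $\mathcal{X}_{swap}$. For every $c\in\mathcal{C}^k_{ac}$, letting $e_c$ denote the number of edges of $c$, \[(m-1)\mathcal{M}_k\le\mathrm{TD}(c,\mathcal{C}^k_{ac})\le e_c+n(m-1)\mathcal{U}_k.\]
   Context: Variables $V=\{v_1,\dots,v_n\}$, each with a finite domain of size $m$. An outcome assigns a value to every variable; $\mathcal{O}_X$ denotes assignments to $X\subseteq V$. A complete CP-net specifies for each $v_i$ a parent set $Pa(v_i)\subseteq V\setminus\{v_i\}$ and, for each context $\gamma\in\mathcal{O}_{Pa(v_i)}$, a strict total order $\succ^{v_i}_\gamma$ on $D_{v_i}$; parents are non-dummy. Its edges are the pairs $(v_j,v_i)$ with $v_j\in Pa(v_i)$; acyclic means this graph is acyclic; $k$-bounded means all $|Pa(v_i)|\le k$. Improving flip: changing only $v_i$ to a value preferred under $\succ^{v_i}_{o[Pa(v_i)]}$; $o'\succ o$ iff a nonempty sequence of improving flips leads from $o$ to $o'$. A swap is an ordered pair $x=(x.1,x.2)$ of outcomes differing in exactly one variable; $\mathcal{X}_{swap}$ contains exactly one ordering of each such pair (fixed arbitrarily); a CP-net $N$ is the concept $c_N(x)=1$ iff $x.1\succ x.2$. $\mathrm{TD}(c,\mathcal{C})$ is the minimum size of a set of labeled examples consistent with $c$ and with no other concept of $\mathcal{C}$. $\mathcal{M}_k=(n-k)m^k+\frac{m^k-1}{m-1}$.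 $\mathcal{U}_k$ is the smallest size of a set $S\subseteq\{1,\dots,m\}^{n-1}$ whose projection onto every set of $k$ coordinates contains all $m^k$ vectors. *)

theory Defs
  imports Complex_Main
begin

text \<open>Variables are v_0,...,v_{n-1} (indices i < n); every domain is {0..<m}.
  Outcomes are functions nat => nat, extensional (0 outside {0..<n}).\<close>

definition outcome :: "nat \<Rightarrow> nat \<Rightarrow> (nat \<Rightarrow> nat) \<Rightarrow> bool" where
  "outcome n m q \<longleftrightarrow> (\<forall>i<n. q i < m) \<and> (\<forall>i\<ge>n. q i = 0)"

text \<open>A CP-net is a pair (Pa, cpt): Pa i is the parent set of v_i, and
  cpt i q a b means a is preferred to b for v_i in the context q restricted to Pa i
  (cpt i q is required to depend only on the values of q on Pa i).\<close>

type_synonym cpnet = "(nat \<Rightarrow> nat set) \<times> (nat \<Rightarrow> (nat \<Rightarrow> nat) \<Rightarrow> nat \<Rightarrow> nat \<Rightarrow> bool)"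

definition strict_total_on :: "nat set \<Rightarrow> (nat \<Rightarrow> nat \<Rightarrow> bool) \<Rightarrow> bool" where
  "strict_total_on D r \<longleftrightarrow>
     (\<forall>a\<in>D. \<not> r a a) \<and>
     (\<forall>a\<in>D. \<forall>b\<in>D. \<forall>c\<in>D. r a b \<longrightarrow> r b c \<longrightarrow> r a c) \<and>
     (\<forall>a\<in>D. \<forall>b\<in>D. a \<noteq> b \<longrightarrow> r a b \<or> r b a)"

definition cp_edges :: "nat \<Rightarrow> cpnet \<Rightarrow> (nat \<times> nat) set" where
  "cp_edges n N = {(j, i). i < n \<and> j \<in> fst N i}"

definition complete_cpnet :: "nat \<Rightarrow> nat \<Rightarrow> cpnet \<Rightarrow> bool" where
  "complete_cpnet n m N \<longleftrightarrow>
     (\<forall>i<n. fst N i \<subseteq> {0..<n} - {i}) \<and>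
     \<comment> \<open>the preference order depends only on the context, i.e. the parent values\<close>
     (\<forall>i<n. \<forall>q p. outcome n m q \<longrightarrow> outcome n m p \<longrightarrow> (\<forall>j\<in>fst N i. q j = p j)
        \<longrightarrow> (\<forall>a<m. \<forall>b<m. snd N i q a b = snd N i p a b)) \<and>
     \<comment> \<open>each context gives a strict total order on the domain\<close>
     (\<forall>i<n. \<forall>q. outcome n m q \<longrightarrow> strict_total_on {0..<m} (snd N i q)) \<and>
     \<comment> \<open>parents are non-dummy\<close>
     (\<forall>i<n. \<forall>j\<in>fst N i. \<exists>q p. outcome n m q \<and> outcome n m p \<and>
        (\<forall>l\<in>fst N i - {j}. q l = p l) \<and>
        (\<exists>a<m. \<exists>b<m. snd N i q a b \<noteq> snd N i p a b))"

definition acyclic_cpnet :: "nat \<Rightarrow> cpnet \<Rightarrow> bool" where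
  "acyclic_cpnet n N \<longleftrightarrow> acyclic (cp_edges n N)"

definition k_bounded :: "nat \<Rightarrow> nat \<Rightarrow> cpnet \<Rightarrow> bool" where
  "k_bounded n k N \<longleftrightarrow> (\<forall>i<n. card (fst N i) \<le> k)"

definition improving_flip :: "nat \<Rightarrow> nat \<Rightarrow> cpnet \<Rightarrow> (nat \<Rightarrow> nat) \<Rightarrow> (nat \<Rightarrow> nat) \<Rightarrow> bool" where
  "improving_flip n m N q p \<longleftrightarrow> outcome n m q \<and> outcome n m p \<and>
     (\<exists>i<n. (\<forall>j. j \<noteq> i \<longrightarrow> q j = p j) \<and> snd N i q (p i) (q i))"

text \<open>dominates N p q: p \<succ> q, i.e. a nonempty sequence of improving flips leads from q to p\<close>
definition dominates :: "nat \<Rightarrow> nat \<Rightarrow> cpnet \<Rightarrow> (nat \<Rightarrow> nat) \<Rightarrow> (nat \<Rightarrow> nat) \<Rightarrow> bool" where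
  "dominates n m N p q \<longleftrightarrow> (improving_flip n m N)\<^sup>+\<^sup>+ q p"

definition is_swap :: "nat \<Rightarrow> nat \<Rightarrow> (nat \<Rightarrow> nat) \<Rightarrow> (nat \<Rightarrow> nat) \<Rightarrow> bool" where
  "is_swap n m q p \<longleftrightarrow> outcome n m q \<and> outcome n m p \<and>
     (\<exists>i<n. q i \<noteq> p i \<and> (\<forall>j. j \<noteq> i \<longrightarrow> q j = p j))"

definition swap_space :: "nat \<Rightarrow> nat \<Rightarrow> ((nat \<Rightarrow> nat) \<times> (nat \<Rightarrow> nat)) set \<Rightarrow> bool" where
  "swap_space n m X \<longleftrightarrow>
     (\<forall>x\<in>X. is_swap n m (fst x) (snd x)) \<and>
     (\<forall>q p. is_swap n m q p \<longrightarrow> ((q, p) \<in> X \<longleftrightarrow> (p, q) \<notin> X))"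

definition concept :: "nat \<Rightarrow> nat \<Rightarrow> ((nat \<Rightarrow> nat) \<times> (nat \<Rightarrow> nat)) set \<Rightarrow> cpnet
    \<Rightarrow> ((nat \<Rightarrow> nat) \<times> (nat \<Rightarrow> nat)) \<Rightarrow> bool" where
  "concept n m X N x \<longleftrightarrow> x \<in> X \<and> dominates n m N (fst x) (snd x)"

definition acyc_class :: "nat \<Rightarrow> nat \<Rightarrow> nat \<Rightarrow> ((nat \<Rightarrow> nat) \<times> (nat \<Rightarrow> nat)) set
    \<Rightarrow> (((nat \<Rightarrow> nat) \<times> (nat \<Rightarrow> nat)) \<Rightarrow> bool) set" where
  "acyc_class n m k X = {concept n m X N | N. complete_cpnet n m N \<and> acyclic_cpnet n N \<and> k_bounded n k N}"

definition teaching_set :: "'x set \<Rightarrow> ('x \<Rightarrow> bool) \<Rightarrow> ('x \<Rightarrow> bool) set \<Rightarrow> 'x set \<Rightarrow> bool" where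
  "teaching_set X c C S \<longleftrightarrow> S \<subseteq> X \<and> finite S \<and>
     (\<forall>c'\<in>C. (\<forall>x\<in>S. c' x = c x) \<longrightarrow> c' = c)"

definition TD :: "'x set \<Rightarrow> ('x \<Rightarrow> bool) \<Rightarrow> ('x \<Rightarrow> bool) set \<Rightarrow> nat" where
  "TD X c C = (LEAST t. \<exists>S. teaching_set X c C S \<and> card S = t)"

definition M_k :: "nat \<Rightarrow> nat \<Rightarrow> nat \<Rightarrow> real" where
  "M_k n m k = real (n - k) * real m ^ k + (real m ^ k - 1) / (real m - 1)"

definition k_universal :: "nat \<Rightarrow> nat \<Rightarrow> nat \<Rightarrow> nat list set \<Rightarrow> bool" where
  "k_universal n m k S \<longleftrightarrow>
     (\<forall>s\<in>S. length s = n - 1 \<and> set s \<subseteq> {1..m}) \<and>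
     (\<forall>I. I \<subseteq> {0..<n-1} \<longrightarrow> card I = k \<longrightarrow>
        (\<forall>v. (\<forall>i\<in>I. v i \<in> {1..m}) \<longrightarrow> (\<exists>s\<in>S. \<forall>i\<in>I. s ! i = v i)))"

definition U_k :: "nat \<Rightarrow> nat \<Rightarrow> nat \<Rightarrow> nat" where
  "U_k n m k = (LEAST t. \<exists>S. finite S \<and> k_universal n m k S \<and> card S = t)"

end

(*
  List the variables so that each precedes its descendants; the t-th variable v has
  at least t non-descendants, so it may be given a parent set P of min(t, k) non-descendants
  containing its actual parents.  For every assignment to P and every pair of values adjacent in
  the order of v under that assignment, a teaching set must contain a swap of v, in a context
  extending the assignment, that exchanges exactly these two values: otherwise exchanging them in
  the CPT of v in precisely those contexts gives another acyclic k-bounded CP-net consistent with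
  the sample.  This yields (m - 1) m^min(t, k) distinct swaps for the t-th variable, and the sum
  over t is (m - 1) M_k.

  For every variable v_i, every context read off a vector of a k-universal set and
  every pair of values adjacent in the order of v_i at that context take the corresponding swap,
  and add for every edge one swap witnessing that the parent is non-dummy.  A consistent net then
  contains all edges of the target; as it has at most k parents, every context of v_i agrees on
  them with a universal context, where the adjacent swaps pin down the whole order.

  In both directions the label of a swap is read off the CPT directly, because in an acyclic net
  the potential sum_u rank(u) (nm)^#descendants(u) strictly increases along improving flips.
*)

theory Submission
  imports Defs "HOL-Library.FuncSet"
begin

section \<open>Strict total orders on an initial segment\<close>

lemma strict_total_on_irrefl:
  "strict_total_on {0..<m} r \<Longrightarrow> a < m \<Longrightarrow> \<not> r a a"
  unfolding strict_total_on_def by simp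

lemma strict_total_on_trans:
  "strict_total_on {0..<m} r \<Longrightarrow> a < m \<Longrightarrow> b < m \<Longrightarrow> c < m \<Longrightarrow> r a b \<Longrightarrow> r b c \<Longrightarrow> r a c"
  unfolding strict_total_on_def by (meson atLeastLessThan_iff zero_le)

lemma strict_total_on_total:
  "strict_total_on {0..<m} r \<Longrightarrow> a < m \<Longrightarrow> b < m \<Longrightarrow> a \<noteq> b \<Longrightarrow> r a b \<or> r b a"
  unfolding strict_total_on_def by simp

lemma strict_total_on_asym:
  "strict_total_on {0..<m} r \<Longrightarrow> a < m \<Longrightarrow> b < m \<Longrightarrow> r a b \<Longrightarrow> \<not> r b a"
  by (meson strict_total_on_irrefl strict_total_on_trans)

lemma strict_total_on_not_iff:
  "strict_total_on {0..<m} r \<Longrightarrow> a < m \<Longrightarrow> b < m \<Longrightarrow> a \<noteq> b \<Longrightarrow> \<not> r b a \<longleftrightarrow> r a b"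
  by (metis strict_total_on_asym strict_total_on_total)

definition pref_rank :: "nat \<Rightarrow> (nat \<Rightarrow> nat \<Rightarrow> bool) \<Rightarrow> nat \<Rightarrow> nat" where
  "pref_rank m r x = card {y\<in>{0..<m}. r x y}"

definition value_of_rank :: "nat \<Rightarrow> (nat \<Rightarrow> nat \<Rightarrow> bool) \<Rightarrow> nat \<Rightarrow> nat" where
  "value_of_rank m r = inv_into {0..<m} (pref_rank m r)"

lemma pref_rank_cong: "(\<And>b. b < m \<Longrightarrow> r' a b = r a b) \<Longrightarrow> pref_rank m r' a = pref_rank m r a"
  unfolding pref_rank_def by (rule arg_cong[where f = card]) auto

lemma pref_rank_less:
  assumes "strict_total_on {0..<m} r" "x < m"
  shows "pref_rank m r x < m"
proof -
  have "{y\<in>{0..<m}. r x y} \<subseteq> {0..<m} - {x}"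
    using strict_total_on_irrefl[OF assms] by auto
  hence "pref_rank m r x \<le> card ({0..<m} - {x})"
    unfolding pref_rank_def by (intro card_mono) auto
  thus ?thesis using assms(2) by simp
qed

lemma pref_rank_strict_anti:
  assumes r: "strict_total_on {0..<m} r" and "x < m" "y < m" "r x y"
  shows "pref_rank m r y < pref_rank m r x"
proof -
  have "{z\<in>{0..<m}. r y z} \<subset> {z\<in>{0..<m}. r x z}"
    using assms strict_total_on_trans[OF r, of x y] strict_total_on_irrefl[OF r, of y] by auto
  thus ?thesis unfolding pref_rank_def by (intro psubset_card_mono) auto
qed

lemma pref_rank_less_iff:
  assumes r: "strict_total_on {0..<m} r" and "x < m" "y < m"
  shows "pref_rank m r y < pref_rank m r x \<longleftrightarrow> r x y"
  using assms pref_rank_strict_anti[OF r] strict_total_on_total[OF r]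
  by (metis less_not_refl less_asym)

lemma bij_betw_pref_rank:
  assumes r: "strict_total_on {0..<m} r"
  shows "bij_betw (pref_rank m r) {0..<m} {0..<m}"
proof -
  have inj: "inj_on (pref_rank m r) {0..<m}"
    by (rule inj_onI) (metis atLeastLessThan_iff pref_rank_strict_anti[OF r]
        strict_total_on_total[OF r] less_not_refl)
  have "pref_rank m r ` {0..<m} \<subseteq> {0..<m}"
    using pref_rank_less[OF r] by auto
  moreover have "card (pref_rank m r ` {0..<m}) = card {0..<m}"
    using card_image[OF inj] by simp
  ultimately have "pref_rank m r ` {0..<m} = {0..<m}"
    by (intro card_subset_eq) auto
  thus ?thesis using inj unfolding bij_betw_def by simp
qed

lemma bij_betw_value_of_rank:
  "strict_total_on {0..<m} r \<Longrightarrow> bij_betw (value_of_rank m r) {0..<m} {0..<m}"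
  unfolding value_of_rank_def by (rule bij_betw_inv_into[OF bij_betw_pref_rank])

lemma value_of_rank_less: "strict_total_on {0..<m} r \<Longrightarrow> t < m \<Longrightarrow> value_of_rank m r t < m"
  using bij_betwE[OF bij_betw_value_of_rank] by simp

lemma value_of_rank_inject:
  "strict_total_on {0..<m} r \<Longrightarrow> t < m \<Longrightarrow> t' < m \<Longrightarrow>
    value_of_rank m r t = value_of_rank m r t' \<longleftrightarrow> t = t'"
  by (metis atLeastLessThan_iff bij_betw_imp_inj_on bij_betw_value_of_rank inj_on_contraD zero_le)

lemma pref_rank_value_of_rank:
  "strict_total_on {0..<m} r \<Longrightarrow> t < m \<Longrightarrow> pref_rank m r (value_of_rank m r t) = t"
  unfolding value_of_rank_def by (simp add: bij_betw_inv_into_right[OF bij_betw_pref_rank])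

lemma value_of_rank_pref_rank:
  "strict_total_on {0..<m} r \<Longrightarrow> x < m \<Longrightarrow> value_of_rank m r (pref_rank m r x) = x"
  unfolding value_of_rank_def by (simp add: bij_betw_inv_into_left[OF bij_betw_pref_rank])

lemma value_of_rank_pref_pred:
  assumes r: "strict_total_on {0..<m} r" and "0 < t" "t < m"
  shows "r (value_of_rank m r t) (value_of_rank m r (t - 1))"
  using assms by (subst pref_rank_less_iff[OF r, symmetric])
    (auto simp: value_of_rank_less pref_rank_value_of_rank)

lemma value_of_rank_adjacent:
  assumes r: "strict_total_on {0..<m} r" and "0 < t" "t < m" and "c < m"
  shows "\<not> (r (value_of_rank m r t) c \<and> r c (value_of_rank m r (t - 1)))"
  using assms pref_rank_less_iff[OF r] value_of_rank_less[OF r] pref_rank_value_of_rank[OF r]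
  by (metis One_nat_def Suc_pred less_Suc_eq_le not_le less_imp_diff_less)

lemma doubleton_value_of_rank_inject:
  assumes "strict_total_on {0..<m} r" "0 < t" "t < m" "0 < t'" "t' < m"
    and "{value_of_rank m r t, value_of_rank m r (t - 1)} = {value_of_rank m r t', value_of_rank m r (t' - 1)}"
  shows "t = t'"
  using assms value_of_rank_inject[OF assms(1)] by (auto simp: doubleton_eq_iff)

lemma strict_total_on_eqI_adjacent:
  assumes r: "strict_total_on {0..<m} r" and r': "strict_total_on {0..<m} r'"
    and adj: "\<And>t. 0 < t \<Longrightarrow> t < m \<Longrightarrow> r' (value_of_rank m r t) (value_of_rank m r (t - 1))"
    and "a < m" "b < m"
  shows "r' a b = r a b"
proof -
  have step: "r' x y" if "x < m" "y < m" "pref_rank m r x = pref_rank m r y + 1" for x y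
  proof -
    have "r' (value_of_rank m r (pref_rank m r x)) (value_of_rank m r (pref_rank m r x - 1))"
      using that pref_rank_less[OF r that(1)] by (intro adj) auto
    thus ?thesis using that value_of_rank_pref_rank[OF r] by (metis add_diff_cancel_right')
  qed
  have below: "r' x y" if "x < m" "y < m" "pref_rank m r x = pref_rank m r y + d + 1" for d x y
    using that
  proof (induction d arbitrary: x)
    case 0
    thus ?case using step by simp
  next
    case (Suc d)
    define z where "z = value_of_rank m r (pref_rank m r y + d + 1)"
    have "pref_rank m r y + d + 1 < m"
      using Suc.prems pref_rank_less[OF r, of x] by simp
    hence z: "z < m" "pref_rank m r z = pref_rank m r y + d + 1"
      unfolding z_def using value_of_rank_less[OF r] pref_rank_value_of_rank[OF r] by auto
    have "r' z y" using Suc.IH[OF z(1) Suc.prems(2) z(2)] .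
    moreover have "r' x z" using step[OF Suc.prems(1) z(1)] Suc.prems(3) z(2) by simp
    ultimately show ?case using strict_total_on_trans[OF r'] Suc.prems z by blast
  qed
  have "r' x y" if xy: "x < m" "y < m" "r x y" for x y
  proof -
    obtain d where "pref_rank m r x = pref_rank m r y + d + 1"
      using pref_rank_strict_anti[OF r xy] by (metis add.commute less_imp_Suc_add plus_1_eq_Suc)
    thus ?thesis using below xy by blast
  qed
  thus ?thesis
    using assms(4,5) strict_total_on_total[OF r] strict_total_on_asym[OF r'] strict_total_on_irrefl[OF r']
    by metis
qed

definition swap_pair :: "(nat \<Rightarrow> nat \<Rightarrow> bool) \<Rightarrow> nat \<Rightarrow> nat \<Rightarrow> nat \<Rightarrow> nat \<Rightarrow> bool" where
  "swap_pair r a b x y = (if (x = a \<and> y = b) \<or> (x = b \<and> y = a) then r y x else r x y)"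

lemma swap_pair_trans:
  assumes r: "strict_total_on {0..<m} r"
    and ab: "a < m" "b < m" "r a b" and adj: "\<And>c. c < m \<Longrightarrow> \<not> (r a c \<and> r c b)"
    and xm: "x < m" "y < m" "z < m"
    and xy: "swap_pair r a b x y" and yz: "swap_pair r a b y z"
  shows "swap_pair r a b x z"
proof -
  have ir: "\<And>x. x<m \<Longrightarrow> \<not> r x x" using strict_total_on_irrefl[OF r] .
  have ne: "a \<noteq> b" using ab ir by blast
  have nba: "\<not> r b a" using strict_total_on_asym[OF r ab] .
  show ?thesis
  proof (cases "x = a \<and> y = b \<or> x = b \<and> y = a")
    case True
    hence h1: "r y x" using xy unfolding swap_pair_def by simp
    have xb: "x = b" "y = a" using True h1 nba by auto
    show ?thesis
    proof (cases "y = a \<and> z = b \<or> y = b \<and> z = a")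
      case True2: True
      hence "z = b" using xb ne by auto
      hence False using yz xb ir ab nba unfolding swap_pair_def by auto
      thus ?thesis ..
    next
      case False2: False
      hence h2: "r a z" "z \<noteq> b" using yz xb unfolding swap_pair_def by auto
      have "z \<noteq> a" using h2 ir ab by auto
      have "r b z \<or> r z b" using strict_total_on_total[OF r ab(2) xm(3)] h2 by auto
      hence "r b z" using adj[OF xm(3)] h2 by blast
      thus ?thesis using xb \<open>z \<noteq> a\<close> h2 unfolding swap_pair_def by auto
    qed
  next
    case False
    hence h1: "r x y" using xy unfolding swap_pair_def by simp
    show ?thesis
    proof (cases "y = a \<and> z = b \<or> y = b \<and> z = a")
      case True2: True
      hence h2: "r z y" using yz unfolding swap_pair_def by simp
      have yb: "y = b" "z = a" using True2 h2 nba by auto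
      have "x \<noteq> a" using False yb by auto
      have "x \<noteq> b" using h1 yb ir ab by auto
      have "r x a \<or> r a x" using strict_total_on_total[OF r xm(1) ab(1)] \<open>x \<noteq> a\<close> by auto
      hence "r x a" using adj[OF xm(1)] h1 yb by blast
      thus ?thesis using yb \<open>x \<noteq> a\<close> \<open>x \<noteq> b\<close> unfolding swap_pair_def by auto
    next
      case False2: False
      hence h2: "r y z" using yz unfolding swap_pair_def by simp
      have xz: "r x z" using strict_total_on_trans[OF r xm h1 h2] .
      have "\<not> (x = a \<and> z = b)" using adj[OF xm(2)] h1 h2 by blast
      moreover have "\<not> (x = b \<and> z = a)" using xz nba by auto
      ultimately show ?thesis using xz unfolding swap_pair_def by auto
    qed
  qed
qed

lemma strict_total_on_swap_pair:
  assumes r: "strict_total_on {0..<m} r" and ab: "a < m" "b < m" "r a b"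
    and adj: "\<And>c. c < m \<Longrightarrow> \<not> (r a c \<and> r c b)"
  shows "strict_total_on {0..<m} (swap_pair r a b)"
  unfolding strict_total_on_def
proof (intro conjI ballI impI)
  show "\<not> swap_pair r a b x x" if "x \<in> {0..<m}" for x
    using that strict_total_on_irrefl[OF r, of x] unfolding swap_pair_def by simp
  show "swap_pair r a b x y \<or> swap_pair r a b y x" if "x \<in> {0..<m}" "y \<in> {0..<m}" "x \<noteq> y" for x y
    using that strict_total_on_total[OF r, of x y] strict_total_on_total[OF r, of y x]
    unfolding swap_pair_def by auto
  show "swap_pair r a b x z" if "x \<in> {0..<m}" "y \<in> {0..<m}" "z \<in> {0..<m}"
    "swap_pair r a b x y" "swap_pair r a b y z" for x y z
    using that swap_pair_trans[OF r ab adj, of x y z] by simp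
qed

section \<open>Acyclic CP-nets and swaps\<close>

lemma complete_cpnet_local:
  assumes "complete_cpnet n m N" "i < n" "outcome n m q" "outcome n m p"
    "\<forall>j\<in>fst N i. q j = p j" "a < m" "b < m"
  shows "snd N i q a b = snd N i p a b"
  using assms unfolding complete_cpnet_def by blast

lemma complete_cpnet_order:
  "complete_cpnet n m N \<Longrightarrow> i < n \<Longrightarrow> outcome n m q \<Longrightarrow> strict_total_on {0..<m} (snd N i q)"
  unfolding complete_cpnet_def by blast

lemma complete_cpnet_parents: "complete_cpnet n m N \<Longrightarrow> i < n \<Longrightarrow> fst N i \<subseteq> {0..<n} - {i}"
  unfolding complete_cpnet_def by blast

lemma complete_cpnet_nondummy:
  assumes "complete_cpnet n m N" "i < n" "j \<in> fst N i"
  obtains q p where "outcome n m q" "outcome n m p" "\<forall>l\<in>fst N i - {j}. q l = p l"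
    "\<exists>a<m. \<exists>b<m. snd N i q a b \<noteq> snd N i p a b"
  using assms unfolding complete_cpnet_def by blast

lemma cp_edges_subset: "complete_cpnet n m N \<Longrightarrow> cp_edges n N \<subseteq> {0..<n} \<times> {0..<n}"
  using complete_cpnet_parents unfolding cp_edges_def by fastforce

lemma outcome_fun_upd: "outcome n m q \<Longrightarrow> i < n \<Longrightarrow> b < m \<Longrightarrow> outcome n m (q(i := b))"
  unfolding outcome_def by auto

lemma complete_cpnet_fun_upd_self:
  assumes c: "complete_cpnet n m N" and "i < n" "outcome n m w" "b < m" "x < m" "y < m"
  shows "snd N i (w(i := b)) x y = snd N i w x y"
  using assms complete_cpnet_parents[OF c] outcome_fun_upd
  by (intro complete_cpnet_local[OF c]) auto

text \<open>In an acyclic CP-net a variable weighs more than \<open>m - 1\<close> times all its children together,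
  so an improving flip, which raises the rank of the flipped variable by at least one and changes
  only the ranks of its children, strictly increases the potential.\<close>

definition weight :: "nat \<Rightarrow> nat \<Rightarrow> cpnet \<Rightarrow> nat \<Rightarrow> nat" where
  "weight n m N u = (n * m) ^ card ((cp_edges n N)\<^sup>+ `` {u})"

definition potential :: "nat \<Rightarrow> nat \<Rightarrow> cpnet \<Rightarrow> (nat \<Rightarrow> nat) \<Rightarrow> nat" where
  "potential n m N w = (\<Sum>u\<in>{0..<n}. pref_rank m (snd N u w) (w u) * weight n m N u)"

lemma card_trancl_Image_less:
  assumes "acyclic r" "finite (r\<^sup>+ `` {i})" "(i, u) \<in> r"
  shows "card (r\<^sup>+ `` {u}) < card (r\<^sup>+ `` {i})"
proof (rule psubset_card_mono[OF assms(2)])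
  have "r\<^sup>+ `` {u} \<subseteq> r\<^sup>+ `` {i}" using assms(3) by (auto intro: trancl_into_trancl2)
  moreover have "u \<in> r\<^sup>+ `` {i} - r\<^sup>+ `` {u}" using assms(1,3) by (auto simp: acyclic_def)
  ultimately show "r\<^sup>+ `` {u} \<subset> r\<^sup>+ `` {i}" by blast
qed

lemma sum_weight_children_less:
  assumes c: "complete_cpnet n m N" and ac: "acyclic_cpnet n N" and "m \<ge> 2" and i: "i < n"
  shows "(\<Sum>u\<in>{u\<in>{0..<n}. i \<in> fst N u}. (m - 1) * weight n m N u) < weight n m N i"
proof -
  let ?Ch = "{u\<in>{0..<n}. i \<in> fst N u}"
  define B where "B = n * m"
  have "B \<ge> 1" using assms unfolding B_def by simp
  have child: "B * weight n m N u \<le> weight n m N i" if "u \<in> ?Ch" for u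
  proof -
    have "finite ((cp_edges n N)\<^sup>+ `` {i})"
      using trancl_subset_Sigma[OF cp_edges_subset[OF c]] by (auto intro: finite_subset[of _ "{0..<n}"])
    hence "card ((cp_edges n N)\<^sup>+ `` {u}) < card ((cp_edges n N)\<^sup>+ `` {i})"
      using that ac unfolding acyclic_cpnet_def by (intro card_trancl_Image_less) (auto simp: cp_edges_def)
    thus ?thesis unfolding weight_def B_def[symmetric]
      using power_increasing[OF Suc_leI \<open>B \<ge> 1\<close>] by (metis power_Suc)
  qed
  have "B * (\<Sum>u\<in>?Ch. (m - 1) * weight n m N u) = (\<Sum>u\<in>?Ch. (m - 1) * (B * weight n m N u))"
    by (simp add: sum_distrib_left ac_simps)
  also have "\<dots> \<le> (\<Sum>u\<in>?Ch. (m - 1) * weight n m N i)"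
    using child by (intro sum_mono) simp
  also have "\<dots> = card ?Ch * ((m - 1) * weight n m N i)" by simp
  also have "\<dots> \<le> n * ((m - 1) * weight n m N i)"
    using card_mono[of "{0..<n}" ?Ch] by (intro mult_le_mono1) fastforce
  also have "\<dots> < B * weight n m N i"
    using assms \<open>B \<ge> 1\<close> unfolding B_def weight_def by simp
  finally show ?thesis by simp
qed

lemma improving_flip_potential_less:
  assumes c: "complete_cpnet n m N" and ac: "acyclic_cpnet n N" and m2: "m \<ge> 2"
    and "improving_flip n m N q p"
  shows "potential n m N q < potential n m N p"
proof -
  obtain i where i: "i < n" and eq: "\<forall>j. j \<noteq> i \<longrightarrow> q j = p j" and imp: "snd N i q (p i) (q i)"
    and oq: "outcome n m q" and op: "outcome n m p"
    using assms(4) unfolding improving_flip_def by blast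
  let ?f = "\<lambda>w u. pref_rank m (snd N u w) (w u) * weight n m N u"
  let ?Ch = "{u\<in>{0..<n}. i \<in> fst N u}"
  let ?R = "{u\<in>{0..<n}. u \<noteq> i \<and> i \<notin> fst N u}"
  have split: "potential n m N w = ?f w i + (\<Sum>u\<in>?Ch. ?f w u) + (\<Sum>u\<in>?R. ?f w u)" for w
  proof -
    have dec: "{0..<n} = insert i (?Ch \<union> ?R)" "i \<notin> ?Ch \<union> ?R"
      using i complete_cpnet_parents[OF c i] by auto
    have "potential n m N w = sum (?f w) (insert i (?Ch \<union> ?R))"
      unfolding potential_def by (rule arg_cong[OF dec(1)])
    also have "\<dots> = ?f w i + (\<Sum>u\<in>?Ch \<union> ?R. ?f w u)" using dec(2) by (intro sum.insert) auto
    also have "(\<Sum>u\<in>?Ch \<union> ?R. ?f w u) = (\<Sum>u\<in>?Ch. ?f w u) + (\<Sum>u\<in>?R. ?f w u)"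
      by (intro sum.union_disjoint) auto
    finally show ?thesis by simp
  qed
  have qm: "\<And>j. j < n \<Longrightarrow> q j < m" and pm: "\<And>j. j < n \<Longrightarrow> p j < m"
    using oq op unfolding outcome_def by auto
  have "?f q u = ?f p u" if u: "u \<in> ?R" for u
  proof -
    have "\<forall>j\<in>fst N u. q j = p j" using eq u by auto
    hence "\<forall>b<m. snd N u p (q u) b = snd N u q (q u) b"
      using complete_cpnet_local[OF c _ oq op] u qm by auto
    hence "pref_rank m (snd N u p) (q u) = pref_rank m (snd N u q) (q u)"
      by (auto intro: pref_rank_cong)
    thus ?thesis using eq u by auto
  qed
  hence rest: "(\<Sum>u\<in>?R. ?f q u) = (\<Sum>u\<in>?R. ?f p u)" by (rule sum.cong[OF refl])
  have "(\<Sum>u\<in>?Ch. ?f q u) \<le> (\<Sum>u\<in>?Ch. (m - 1) * weight n m N u)"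
  proof (intro sum_mono mult_le_mono1)
    fix u assume "u \<in> ?Ch"
    hence "pref_rank m (snd N u q) (q u) < m"
      using pref_rank_less[OF complete_cpnet_order[OF c _ oq]] qm by simp
    thus "pref_rank m (snd N u q) (q u) \<le> m - 1" by simp
  qed
  also have "\<dots> < weight n m N i" by (rule sum_weight_children_less[OF c ac m2 i])
  finally have children: "(\<Sum>u\<in>?Ch. ?f q u) < weight n m N i" .
  have "pref_rank m (snd N i q) (q i) < pref_rank m (snd N i q) (p i)"
    using pref_rank_strict_anti[OF complete_cpnet_order[OF c i oq] pm[OF i] qm[OF i] imp] .
  also have "\<dots> = pref_rank m (snd N i p) (p i)"
  proof (rule pref_rank_cong[symmetric])
    have "\<forall>j\<in>fst N i. q j = p j" using eq complete_cpnet_parents[OF c i] by auto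
    thus "snd N i p (p i) b = snd N i q (p i) b" if "b < m" for b
      using complete_cpnet_local[OF c i oq op] pm[OF i] that by auto
  qed
  finally have "?f q i + weight n m N i \<le> ?f p i"
    by (metis Suc_leI add_mult_distrib mult_Suc mult_le_mono1 add.commute)
  thus ?thesis using split[of q] split[of p] children rest by simp
qed

lemma dominates_potential_less:
  assumes c: "complete_cpnet n m N" and ac: "acyclic_cpnet n N" and m2: "m \<ge> 2"
    and d: "dominates n m N p q"
  shows "potential n m N q < potential n m N p"
  using d unfolding dominates_def
proof (induction rule: tranclp_induct)
  case (base y) thus ?case using improving_flip_potential_less[OF c ac m2] by blast
next
  case (step y z) thus ?case using improving_flip_potential_less[OF c ac m2, of y z] by linarith
qed

lemma dominates_fun_upd_iff:
  assumes c: "complete_cpnet n m N" and ac: "acyclic_cpnet n N" and m2: "m \<ge> 2"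
    and oq: "outcome n m q" and i: "i < n" and b: "b < m" "b \<noteq> q i"
  shows "dominates n m N (q(i := b)) q \<longleftrightarrow> snd N i q b (q i)"
proof
  let ?p = "q(i := b)"
  have op: "outcome n m ?p" using outcome_fun_upd[OF oq i b(1)] .
  have qi: "q i < m" using oq i unfolding outcome_def by auto
  assume d: "dominates n m N ?p q"
  show "snd N i q b (q i)"
  proof (rule ccontr)
    assume "\<not> snd N i q b (q i)"
    hence "snd N i q (q i) b" using strict_total_on_total[OF complete_cpnet_order[OF c i oq] b(1) qi b(2)] by blast
    moreover have "\<forall>j\<in>fst N i. ?p j = q j" using complete_cpnet_parents[OF c i] by auto
    ultimately have "snd N i ?p (q i) b" using complete_cpnet_local[OF c i op oq _ qi b(1)] by simp
    hence "improving_flip n m N ?p q" unfolding improving_flip_def using op oq i by auto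
    hence "potential n m N ?p < potential n m N q" using improving_flip_potential_less[OF c ac m2] by blast
    moreover have "potential n m N q < potential n m N ?p" using dominates_potential_less[OF c ac m2 d] .
    ultimately show False by simp
  qed
next
  let ?p = "q(i := b)"
  have op: "outcome n m ?p" using outcome_fun_upd[OF oq i b(1)] .
  assume "snd N i q b (q i)"
  hence "improving_flip n m N q ?p" unfolding improving_flip_def using op oq i by auto
  thus "dominates n m N ?p q" unfolding dominates_def by blast
qed

definition swap_at :: "nat \<Rightarrow> nat \<Rightarrow> nat \<Rightarrow> ((nat \<Rightarrow> nat) \<times> (nat \<Rightarrow> nat)) \<Rightarrow> bool" where
  "swap_at n m i x \<longleftrightarrow> outcome n m (fst x) \<and> outcome n m (snd x) \<and> i < n \<and>
     fst x i \<noteq> snd x i \<and> (\<forall>j. j \<noteq> i \<longrightarrow> fst x j = snd x j)"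

lemma swap_space_obtain_swap_at:
  assumes "swap_space n m X" "x \<in> X"
  obtains i where "swap_at n m i x"
  using assms unfolding swap_space_def is_swap_def swap_at_def by blast

lemma swap_at_unique: "swap_at n m i x \<Longrightarrow> swap_at n m j x \<Longrightarrow> i = j"
  unfolding swap_at_def by (metis (no_types, lifting))

lemma concept_swap_at:
  assumes c: "complete_cpnet n m N" and ac: "acyclic_cpnet n N" and m2: "m \<ge> 2"
    and s: "swap_at n m i x"
  shows "concept n m X N x \<longleftrightarrow> x \<in> X \<and> snd N i (snd x) (fst x i) (snd x i)"
proof -
  have f: "fst x = (snd x)(i := fst x i)" using s unfolding swap_at_def by auto
  have "fst x i < m" using s unfolding swap_at_def outcome_def by auto
  hence "dominates n m N ((snd x)(i := fst x i)) (snd x) \<longleftrightarrow> snd N i (snd x) (fst x i) (snd x i)"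
    using s by (intro dominates_fun_upd_iff[OF c ac m2]) (auto simp: swap_at_def)
  thus ?thesis unfolding concept_def using f by metis
qed

definition swap_example :: "((nat \<Rightarrow> nat) \<times> (nat \<Rightarrow> nat)) set \<Rightarrow> (nat \<Rightarrow> nat) \<Rightarrow> nat \<Rightarrow> nat \<Rightarrow> nat
    \<Rightarrow> (nat \<Rightarrow> nat) \<times> (nat \<Rightarrow> nat)" where
  "swap_example X w i a b =
     (if (w(i := a), w(i := b)) \<in> X then (w(i := a), w(i := b)) else (w(i := b), w(i := a)))"

lemma swap_example_mem:
  assumes "swap_space n m X" "outcome n m w" "i < n" "a < m" "b < m" "a \<noteq> b"
  shows "swap_example X w i a b \<in> X"
proof -
  have "is_swap n m (w(i := a)) (w(i := b))"
    using assms(2-) outcome_fun_upd unfolding is_swap_def by auto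
  thus ?thesis using assms(1) unfolding swap_space_def swap_example_def by auto
qed

lemma concept_swap_example:
  assumes m2: "m \<ge> 2" and sp: "swap_space n m X" and c: "complete_cpnet n m N" and ac: "acyclic_cpnet n N"
    and w: "outcome n m w" and i: "i < n" and ab: "a < m" "b < m" "a \<noteq> b"
  shows "concept n m X N (swap_example X w i a b) \<longleftrightarrow> ((w(i := a), w(i := b)) \<in> X \<longleftrightarrow> snd N i w a b)"
proof -
  have swaps: "swap_at n m i (w(i := a), w(i := b))" "swap_at n m i (w(i := b), w(i := a))"
    using w i ab outcome_fun_upd unfolding swap_at_def by auto
  have "(w(i := a), w(i := b)) \<notin> X \<Longrightarrow> (w(i := b), w(i := a)) \<in> X"
    using swap_example_mem[OF sp w i ab] unfolding swap_example_def by auto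
  moreover have "snd N i w b a \<longleftrightarrow> \<not> snd N i w a b"
    using strict_total_on_not_iff[OF complete_cpnet_order[OF c i w] ab(2,1)] ab(3) by simp
  ultimately show ?thesis
    using concept_swap_at[OF c ac m2 swaps(1)] concept_swap_at[OF c ac m2 swaps(2)]
      complete_cpnet_fun_upd_self[OF c i w] ab
    unfolding swap_example_def by auto
qed

lemma pref_eq_if_concept_eq_swap_example:
  assumes "m \<ge> 2" "swap_space n m X" "complete_cpnet n m N" "acyclic_cpnet n N"
    "complete_cpnet n m N'" "acyclic_cpnet n N'"
    "outcome n m w" "i < n" "a < m" "b < m" "a \<noteq> b"
    and "concept n m X N' (swap_example X w i a b) = concept n m X N (swap_example X w i a b)"
  shows "snd N' i w a b = snd N i w a b"
  using assms concept_swap_example[OF assms(1,2)] by metis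

section \<open>The lower bound\<close>

lemma trancl_avoid_sink:
  assumes rs: "r \<subseteq> V \<times> V" and nw: "\<forall>y. (w, y) \<notin> r"
    and p: "(v, x) \<in> r\<^sup>+" and vw: "v \<noteq> w" and xw: "x \<noteq> w"
  shows "(v, x) \<in> (r \<inter> ((V - {w}) \<times> (V - {w})))\<^sup>+"
  using p xw
proof (induction rule: trancl_induct)
  case (base y)
  have "v \<in> V" "y \<in> V" using base rs by auto
  hence "(v, y) \<in> r \<inter> ((V - {w}) \<times> (V - {w}))" using base vw by auto
  thus ?case by (rule r_into_trancl)
next
  case (step y z)
  have yw: "y \<noteq> w" using step(2) nw by auto
  have "y \<in> V" "z \<in> V" using step(2) rs by auto
  hence "(y, z) \<in> r \<inter> ((V - {w}) \<times> (V - {w}))" using step(2) yw step(4) by auto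
  moreover have "(v, y) \<in> (r \<inter> ((V - {w}) \<times> (V - {w})))\<^sup>+" using step(3) yw by blast
  ultimately show ?case by (rule trancl_into_trancl[rotated])
qed

lemma acyclic_obtain_sink:
  assumes "finite V" "r \<subseteq> V \<times> V" "acyclic r" "V \<noteq> {}"
  obtains w where "w \<in> V" "\<forall>y. (w, y) \<notin> r"
proof -
  have "finite r" using assms(1,2) finite_subset by blast
  hence "wf (r\<inverse>)" using finite_acyclic_wf_converse assms(3) by blast
  then obtain w where "w \<in> V" "\<And>y. (y, w) \<in> r\<inverse> \<Longrightarrow> y \<notin> V"
    using wfE_min assms(4) by (metis ex_in_conv)
  thus thesis using that assms(2) by blast
qed

text \<open>Listing the vertices so that every vertex precedes its descendants, the \<open>t\<close>-th vertex
  has at least \<open>t\<close> non-descendants.\<close>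

lemma sum_le_sum_card_nondescendants:
  fixes f :: "nat \<Rightarrow> nat"
  assumes "mono f" and "finite V" "r \<subseteq> V \<times> V" "acyclic r"
  shows "(\<Sum>t<card V. f t) \<le> (\<Sum>v\<in>V. f (card (V - {v} - r\<^sup>+ `` {v})))"
  using assms(2-)
proof (induction "card V" arbitrary: V r)
  case 0
  thus ?case by simp
next
  case (Suc c)
  have "V \<noteq> {}" using Suc.hyps(2) by auto
  then obtain w where w: "w \<in> V" and sink: "\<forall>y. (w, y) \<notin> r"
    by (rule acyclic_obtain_sink[OF Suc.prems])
  define V' where "V' = V - {w}"
  define r' where "r' = r \<inter> (V' \<times> V')"
  have c: "c = card V'"
    using card_Diff_singleton[OF w] Suc.hyps(2) unfolding V'_def by linarith
  have "finite V'" "r' \<subseteq> V' \<times> V'" "acyclic r'"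
    using Suc.prems acyclic_subset[OF Suc.prems(3)] unfolding V'_def r'_def by auto
  hence IH: "(\<Sum>t<c. f t) \<le> (\<Sum>v\<in>V'. f (card (V' - {v} - r'\<^sup>+ `` {v})))"
    unfolding c by (rule Suc.hyps(1)[OF c])
  have "card (V' - {v} - r'\<^sup>+ `` {v}) \<le> card (V - {v} - r\<^sup>+ `` {v})" if v: "v \<in> V'" for v
  proof (rule card_mono)
    show "finite (V - {v} - r\<^sup>+ `` {v})" using Suc.prems(1) by simp
    have "(v, x) \<in> r'\<^sup>+" if "x \<in> V'" "(v, x) \<in> r\<^sup>+" for x
      using trancl_avoid_sink[OF Suc.prems(2) sink that(2)] v that(1) unfolding V'_def r'_def by simp
    thus "V' - {v} - r'\<^sup>+ `` {v} \<subseteq> V - {v} - r\<^sup>+ `` {v}" unfolding V'_def by blast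
  qed
  hence "(\<Sum>v\<in>V'. f (card (V' - {v} - r'\<^sup>+ `` {v}))) \<le> (\<Sum>v\<in>V'. f (card (V - {v} - r\<^sup>+ `` {v})))"
    by (intro sum_mono monoD[OF assms(1)])
  moreover have "r\<^sup>+ `` {w} = {}" using sink by (auto dest: tranclD)
  hence "card (V - {w} - r\<^sup>+ `` {w}) = c" using c unfolding V'_def by simp
  ultimately have "(\<Sum>t<c. f t) + f c \<le> (\<Sum>v\<in>V'. f (card (V - {v} - r\<^sup>+ `` {v}))) + f (card (V - {w} - r\<^sup>+ `` {w}))"
    using IH by simp
  also have "\<dots> = (\<Sum>v\<in>V. f (card (V - {v} - r\<^sup>+ `` {v})))"
    using sum.remove[OF Suc.prems(1) w, of "\<lambda>v. f (card (V - {v} - r\<^sup>+ `` {v}))"] unfolding V'_def by simp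
  finally show ?case using Suc.hyps(2)[symmetric] by simp
qed

text \<open>A table \<open>g\<close> of orders indexed by outcomes that depends only on the values of \<open>P\<close> need not
  be a CPT with parent set \<open>P\<close>, since parents must be non-dummy; its relevant variables are.\<close>

definition relevant_vars :: "nat \<Rightarrow> nat \<Rightarrow> nat set \<Rightarrow> ((nat \<Rightarrow> nat) \<Rightarrow> nat \<Rightarrow> nat \<Rightarrow> bool) \<Rightarrow> nat set" where
  "relevant_vars n m P g = {j\<in>P. \<exists>q p. outcome n m q \<and> outcome n m p \<and> (\<forall>l\<in>P - {j}. q l = p l) \<and>
      (\<exists>a<m. \<exists>b<m. g q a b \<noteq> g p a b)}"

lemma relevant_vars_subset: "relevant_vars n m P g \<subseteq> P"
  unfolding relevant_vars_def by auto

lemma relevant_vars_nondummy: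
  assumes "j \<in> relevant_vars n m P g"
  shows "\<exists>q p. outcome n m q \<and> outcome n m p \<and> (\<forall>l\<in>relevant_vars n m P g - {j}. q l = p l) \<and>
      (\<exists>a<m. \<exists>b<m. g q a b \<noteq> g p a b)"
proof -
  obtain q p where "outcome n m q" "outcome n m p" "\<forall>l\<in>P - {j}. q l = p l"
    "\<exists>a<m. \<exists>b<m. g q a b \<noteq> g p a b"
    using assms unfolding relevant_vars_def by blast
  thus ?thesis using relevant_vars_subset[of n m P g] by blast
qed

lemma relevant_vars_determine:
  assumes fin: "finite P" and Pn: "P \<subseteq> {0..<n}"
    and dep: "\<forall>q p. outcome n m q \<longrightarrow> outcome n m p \<longrightarrow> (\<forall>j\<in>P. q j = p j) \<longrightarrow> (\<forall>a<m. \<forall>b<m. g q a b = g p a b)"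
    and oq: "outcome n m q" and op: "outcome n m p" and ag: "\<forall>j\<in>relevant_vars n m P g. q j = p j"
  shows "\<forall>a<m. \<forall>b<m. g q a b = g p a b"
proof -
  have main: "finite F \<Longrightarrow> F \<subseteq> P - relevant_vars n m P g \<Longrightarrow> \<forall>q p. outcome n m q \<longrightarrow> outcome n m p \<longrightarrow>
      (\<forall>j\<in>P-F. q j = p j) \<longrightarrow> (\<forall>a<m. \<forall>b<m. g q a b = g p a b)" for F
  proof (induction F rule: finite_induct)
    case empty
    show ?case
    proof (intro allI impI)
      fix q p a b assume h: "outcome n m q" "outcome n m p" "\<forall>j\<in>P - {}. q j = p j" "a < m" "b < m"
      have "\<forall>j\<in>P. q j = p j" using h(3) by simp
      hence "\<forall>a<m. \<forall>b<m. g q a b = g p a b" using dep h(1,2) by blast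
      thus "g q a b = g p a b" using h(4,5) by blast
    qed
  next
    case (insert j F)
    show ?case
    proof (intro allI impI)
      fix q p a b assume oq: "outcome n m q" and op: "outcome n m p"
        and ag: "\<forall>j'\<in>P - insert j F. q j' = p j'" and ab: "a < m" "b < m"
      have jP: "j \<in> P" "j \<notin> relevant_vars n m P g" using insert.prems by auto
      have jn: "j < n" using jP Pn by auto
      have pj: "p j < m" using op jn unfolding outcome_def by blast
      define q' where "q' = q(j := p j)"
      have oq': "outcome n m q'" unfolding q'_def by (rule outcome_fun_upd[OF oq jn pj])
      have ag': "\<forall>j'\<in>P - F. q' j' = p j'"
      proof
        fix j' assume "j' \<in> P - F"
        thus "q' j' = p j'" using ag unfolding q'_def by (cases "j' = j") auto
      qed
      have Fs: "F \<subseteq> P - relevant_vars n m P g" using insert.prems by simp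
      have e1: "g q' a b = g p a b" using insert.IH[OF Fs] oq' op ag' ab by blast
      have agj: "\<forall>l\<in>P-{j}. q l = q' l" unfolding q'_def by auto
      have "\<not> (\<exists>q p. outcome n m q \<and> outcome n m p \<and> (\<forall>l\<in>P-{j}. q l = p l) \<and>
          (\<exists>a<m. \<exists>b<m. g q a b \<noteq> g p a b))" using jP unfolding relevant_vars_def by simp
      hence "\<not> (\<exists>a<m. \<exists>b<m. g q a b \<noteq> g q' a b)" using oq oq' agj by blast
      hence "g q a b = g q' a b" using ab by blast
      thus "g q a b = g p a b" using e1 by simp
    qed
  qed
  have f2: "finite (P - relevant_vars n m P g)" using fin by simp
  have a2: "\<forall>j\<in>P - (P - relevant_vars n m P g). q j = p j" using ag by auto
  show ?thesis using main[OF f2 subset_refl] oq op a2 by blast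
qed

lemma rtrancl_redirect_into:
  "(v, y) \<in> ({e\<in>r. snd e \<noteq> v} \<union> Q \<times> {v})\<^sup>* \<Longrightarrow> y = v \<or> (v, y) \<in> r\<^sup>+"
  by (induction rule: rtrancl_induct) (auto intro: trancl_into_trancl)

lemma acyclic_redirect_into:
  assumes ac: "acyclic r" and fin: "finite P" and vP: "v \<notin> P" and nd: "P \<inter> r\<^sup>+ `` {v} = {}"
  shows "acyclic ({e\<in>r. snd e \<noteq> v} \<union> P \<times> {v})"
proof -
  have "finite Q \<Longrightarrow> Q \<subseteq> P \<Longrightarrow> acyclic ({e\<in>r. snd e \<noteq> v} \<union> Q \<times> {v})" for Q
  proof (induction Q rule: finite_induct)
    case empty
    have "{e\<in>r. snd e \<noteq> v} \<union> {} \<times> {v} \<subseteq> r" by auto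
    thus ?case by (rule acyclic_subset[OF ac])
  next
    case (insert p Q)
    have eq: "{e\<in>r. snd e \<noteq> v} \<union> insert p Q \<times> {v} = insert (p, v) ({e\<in>r. snd e \<noteq> v} \<union> Q \<times> {v})" by auto
    have pP: "p \<in> P" using insert.prems by simp
    have pv: "p \<noteq> v" using pP vP by auto
    have pv2: "(v, p) \<notin> r\<^sup>+" using pP nd by auto
    have "(v, p) \<notin> ({e\<in>r. snd e \<noteq> v} \<union> Q \<times> {v})\<^sup>*"
    proof
      assume "(v, p) \<in> ({e\<in>r. snd e \<noteq> v} \<union> Q \<times> {v})\<^sup>*"
      hence "p = v \<or> (v, p) \<in> r\<^sup>+" by (rule rtrancl_redirect_into)
      thus False using pv pv2 by simp
    qed
    moreover have "acyclic ({e\<in>r. snd e \<noteq> v} \<union> Q \<times> {v})" using insert.IH insert.prems by simp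
    ultimately show ?case unfolding eq acyclic_insert by blast
  qed
  thus ?thesis using fin by blast
qed

definition extend_context :: "nat set \<Rightarrow> (nat \<Rightarrow> nat) \<Rightarrow> nat \<Rightarrow> nat" where
  "extend_context P \<gamma> = (\<lambda>j. if j \<in> P then \<gamma> j else 0)"

lemma outcome_extend_context:
  "P \<subseteq> {0..<n} \<Longrightarrow> \<forall>j\<in>P. \<gamma> j < m \<Longrightarrow> 0 < m \<Longrightarrow> outcome n m (extend_context P \<gamma>)"
  unfolding outcome_def extend_context_def by auto

definition replace_cpt :: "nat \<Rightarrow> nat \<Rightarrow> cpnet \<Rightarrow> nat \<Rightarrow> nat set \<Rightarrow> ((nat \<Rightarrow> nat) \<Rightarrow> nat \<Rightarrow> nat \<Rightarrow> bool)
    \<Rightarrow> cpnet" where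
  "replace_cpt n m N v P g = ((fst N)(v := relevant_vars n m P g), (snd N)(v := g))"

lemma replace_cpt_simps:
  "fst (replace_cpt n m N v P g) = (fst N)(v := relevant_vars n m P g)"
  "snd (replace_cpt n m N v P g) = (snd N)(v := g)"
  unfolding replace_cpt_def by simp_all

lemma replace_cpt_complete:
  assumes c: "complete_cpnet n m N" and v: "v < n" and P: "P \<subseteq> {0..<n} - {v}"
    and local: "\<forall>q p. outcome n m q \<longrightarrow> outcome n m p \<longrightarrow> (\<forall>j\<in>P. q j = p j) \<longrightarrow>
      (\<forall>a<m. \<forall>b<m. g q a b = g p a b)"
    and order: "\<And>q. outcome n m q \<Longrightarrow> strict_total_on {0..<m} (g q)"
  shows "complete_cpnet n m (replace_cpt n m N v P g)"
  unfolding complete_cpnet_def replace_cpt_simps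
proof (intro conjI allI impI ballI)
  fix i assume i: "i < n"
  show "((fst N)(v := relevant_vars n m P g)) i \<subseteq> {0..<n} - {i}"
    using complete_cpnet_parents[OF c i] relevant_vars_subset[of n m P g] P by auto
  show "strict_total_on {0..<m} (((snd N)(v := g)) i q)" if "outcome n m q" for q
    using order[OF that] complete_cpnet_order[OF c i that] by simp
  show "((snd N)(v := g)) i q a b = ((snd N)(v := g)) i p a b"
    if qp: "outcome n m q" "outcome n m p" and agree: "\<forall>j\<in>((fst N)(v := relevant_vars n m P g)) i. q j = p j"
      and ab: "a < m" "b < m" for q p a b
  proof (cases "i = v")
    case True
    have "finite P" using P finite_subset by blast
    moreover have "\<forall>j\<in>relevant_vars n m P g. q j = p j" using agree True by simp
    ultimately have "\<forall>a<m. \<forall>b<m. g q a b = g p a b"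
      using P by (intro relevant_vars_determine[OF _ _ local qp]) auto
    thus ?thesis using True ab by simp
  next
    case False
    thus ?thesis using complete_cpnet_local[OF c i qp _ ab] agree by simp
  qed
  show "\<exists>q p. outcome n m q \<and> outcome n m p \<and> (\<forall>l\<in>((fst N)(v := relevant_vars n m P g)) i - {j}. q l = p l) \<and>
      (\<exists>a<m. \<exists>b<m. ((snd N)(v := g)) i q a b \<noteq> ((snd N)(v := g)) i p a b)"
    if j: "j \<in> ((fst N)(v := relevant_vars n m P g)) i" for j
  proof (cases "i = v")
    case True
    thus ?thesis using relevant_vars_nondummy j by simp
  next
    case False
    hence "j \<in> fst N i" using j by simp
    then obtain q p where "outcome n m q" "outcome n m p" "\<forall>l\<in>fst N i - {j}. q l = p l"
      "\<exists>a<m. \<exists>b<m. snd N i q a b \<noteq> snd N i p a b"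
      by (rule complete_cpnet_nondummy[OF c i])
    thus ?thesis using False by (intro exI[of _ q] exI[of _ p]) simp
  qed
qed

lemma replace_cpt_acyclic:
  assumes "acyclic_cpnet n N" "finite P" "v \<notin> P" "P \<inter> (cp_edges n N)\<^sup>+ `` {v} = {}"
  shows "acyclic_cpnet n (replace_cpt n m N v P g)"
proof -
  have "cp_edges n (replace_cpt n m N v P g) \<subseteq> {e\<in>cp_edges n N. snd e \<noteq> v} \<union> P \<times> {v}"
    using relevant_vars_subset[of n m P g] unfolding cp_edges_def replace_cpt_simps by auto
  thus ?thesis using acyclic_redirect_into[OF _ assms(2-)] assms(1) acyclic_subset
    unfolding acyclic_cpnet_def by blast
qed

lemma replace_cpt_k_bounded:
  assumes "k_bounded n k N" "finite P" "card P \<le> k"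
  shows "k_bounded n k (replace_cpt n m N v P g)"
  using assms card_mono[OF assms(2) relevant_vars_subset[of n m P g]]
  unfolding k_bounded_def replace_cpt_simps by auto

definition swap_in_context :: "cpnet \<Rightarrow> nat \<Rightarrow> nat set \<Rightarrow> (nat \<Rightarrow> nat) \<Rightarrow> nat \<Rightarrow> nat
    \<Rightarrow> (nat \<Rightarrow> nat) \<Rightarrow> nat \<Rightarrow> nat \<Rightarrow> bool" where
  "swap_in_context N v P \<gamma> a b q =
     (if \<forall>j\<in>P. q j = \<gamma> j then swap_pair (snd N v q) a b else snd N v q)"

lemma swap_in_context_local:
  assumes c: "complete_cpnet n m N" and v: "v < n" and "fst N v \<subseteq> P"
  shows "\<forall>q p. outcome n m q \<longrightarrow> outcome n m p \<longrightarrow> (\<forall>j\<in>P. q j = p j) \<longrightarrow>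
      (\<forall>x<m. \<forall>y<m. swap_in_context N v P \<gamma> a b q x y = swap_in_context N v P \<gamma> a b p x y)"
proof (intro allI impI)
  fix q p x y assume q: "outcome n m q" and p: "outcome n m p" and agree: "\<forall>j\<in>P. q j = p j"
    and xy: "x < m" "y < m"
  have "(\<forall>j\<in>P. q j = \<gamma> j) \<longleftrightarrow> (\<forall>j\<in>P. p j = \<gamma> j)" using agree by auto
  moreover have "snd N v q x' y' = snd N v p x' y'" if "x' < m" "y' < m" for x' y'
    using complete_cpnet_local[OF c v q p _ that] agree assms(3) by auto
  ultimately show "swap_in_context N v P \<gamma> a b q x y = swap_in_context N v P \<gamma> a b p x y"
    using xy unfolding swap_in_context_def swap_pair_def by simp
qed

lemma strict_total_on_swap_in_context:
  assumes c: "complete_cpnet n m N" and v: "v < n" and Pa: "fst N v \<subseteq> P"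
    and r: "strict_total_on {0..<m} (snd N v w)" and w: "outcome n m w" "\<forall>j\<in>P. w j = \<gamma> j"
    and t: "0 < t" "t < m"
    and ab: "a = value_of_rank m (snd N v w) t" "b = value_of_rank m (snd N v w) (t - 1)"
    and q: "outcome n m q"
  shows "strict_total_on {0..<m} (swap_in_context N v P \<gamma> a b q)"
proof (cases "\<forall>j\<in>P. q j = \<gamma> j")
  case True
  have same: "snd N v q x y = snd N v w x y" if "x < m" "y < m" for x y
  proof (rule complete_cpnet_local[OF c v q w(1) _ that])
    show "\<forall>j\<in>fst N v. q j = w j" using True w(2) Pa by auto
  qed
  have "strict_total_on {0..<m} (swap_pair (snd N v q) a b)"
  proof (rule strict_total_on_swap_pair[OF complete_cpnet_order[OF c v q]])
    show "a < m" "b < m" using value_of_rank_less[OF r] t ab by auto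
    thus "snd N v q a b" using same value_of_rank_pref_pred[OF r t] ab by simp
    show "\<not> (snd N v q a d \<and> snd N v q d b)" if "d < m" for d
      using same value_of_rank_adjacent[OF r t that] ab \<open>a < m\<close> \<open>b < m\<close> that by simp
  qed
  thus ?thesis using True unfolding swap_in_context_def by simp
next
  case False
  thus ?thesis using complete_cpnet_order[OF c v q] unfolding swap_in_context_def by auto
qed

text \<open>Otherwise swapping the two adjacent values in the CPT of \<open>v\<close>, but only in the contexts that
  agree with \<open>\<gamma>\<close> on \<open>P\<close>, would give a different concept of the class consistent with \<open>S\<close>.\<close>

lemma teaching_set_swaps_adjacent_pair:
  assumes m2: "m \<ge> 2" and sp: "swap_space n m X" and c: "complete_cpnet n m N"
    and ac: "acyclic_cpnet n N" and kb: "k_bounded n k N"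
    and T: "teaching_set X (concept n m X N) (acyc_class n m k X) S"
    and v: "v < n" and Pa: "fst N v \<subseteq> P" and P: "P \<subseteq> {0..<n} - {v}"
    and nd: "P \<inter> (cp_edges n N)\<^sup>+ `` {v} = {}" and cP: "card P \<le> k"
    and \<gamma>: "\<forall>j\<in>P. \<gamma> j < m" and t: "0 < t" "t < m"
  defines "r \<equiv> snd N v (extend_context P \<gamma>)"
  shows "\<exists>x\<in>S. swap_at n m v x \<and> (\<forall>j\<in>P. snd x j = \<gamma> j) \<and>
    {fst x v, snd x v} = {value_of_rank m r t, value_of_rank m r (t - 1)}"
proof (rule ccontr)
  assume none: "\<not> ?thesis"
  define w where "w = extend_context P \<gamma>"
  define a where "a = value_of_rank m r t"
  define b where "b = value_of_rank m r (t - 1)"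
  define N' where "N' = replace_cpt n m N v P (swap_in_context N v P \<gamma> a b)"
  have w: "outcome n m w" "\<forall>j\<in>P. w j = \<gamma> j"
    using outcome_extend_context[of P n \<gamma> m] P \<gamma> m2 unfolding w_def extend_context_def by auto
  have rw: "r = snd N v w" unfolding r_def w_def ..
  have r: "strict_total_on {0..<m} r" unfolding rw by (rule complete_cpnet_order[OF c v w(1)])
  have ab: "a < m" "b < m" "r a b" unfolding a_def b_def
    using value_of_rank_less[OF r] value_of_rank_pref_pred[OF r t] t by auto
  have "finite P" using P finite_subset by blast
  have c': "complete_cpnet n m N'" unfolding N'_def
    using strict_total_on_swap_in_context[OF c v Pa r[unfolded rw] w t a_def[unfolded rw] b_def[unfolded rw]]
    by (intro replace_cpt_complete[OF c v P swap_in_context_local[OF c v Pa]])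
  have ac': "acyclic_cpnet n N'" unfolding N'_def
    using replace_cpt_acyclic[OF ac \<open>finite P\<close> _ nd] P by blast
  have kb': "k_bounded n k N'" unfolding N'_def
    by (rule replace_cpt_k_bounded[OF kb \<open>finite P\<close> cP])
  have "concept n m X N' x = concept n m X N x" if x: "x \<in> S" for x
  proof -
    have "x \<in> X" using x T unfolding teaching_set_def by blast
    then obtain i where i: "swap_at n m i x" by (rule swap_space_obtain_swap_at[OF sp])
    have "\<not> (fst x v = a \<and> snd x v = b \<or> fst x v = b \<and> snd x v = a)"
      if "i = v" "\<forall>j\<in>P. snd x j = \<gamma> j"
      using none x i that unfolding a_def b_def by (auto simp: doubleton_eq_iff)
    hence "snd N' i (snd x) (fst x i) (snd x i) = snd N i (snd x) (fst x i) (snd x i)"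
      unfolding N'_def replace_cpt_simps swap_in_context_def swap_pair_def by auto
    thus ?thesis using concept_swap_at[OF c' ac' m2 i] concept_swap_at[OF c ac m2 i] by simp
  qed
  hence "concept n m X N' = concept n m X N"
    using T c' ac' kb' unfolding teaching_set_def acyc_class_def by blast
  hence "snd N' v w a b = snd N v w a b"
    using pref_eq_if_concept_eq_swap_example[OF m2 sp c ac c' ac' w(1) v ab(1,2)]
      strict_total_on_irrefl[OF r] ab by fastforce
  moreover have "snd N' v w a b = r b a"
    using w(2) unfolding N'_def replace_cpt_simps swap_in_context_def swap_pair_def rw by simp
  ultimately show False using strict_total_on_asym[OF r ab(1,2,3)] ab(3) unfolding rw by simp
qed

lemma card_le_card_if_unique_witnesses:
  assumes "finite B" and ex: "\<And>p. p \<in> A \<Longrightarrow> \<exists>x\<in>B. Q p x"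
    and unique: "\<And>p p' x. p \<in> A \<Longrightarrow> p' \<in> A \<Longrightarrow> Q p x \<Longrightarrow> Q p' x \<Longrightarrow> p = p'"
  shows "card A \<le> card B"
proof -
  obtain f where f: "\<And>p. p \<in> A \<Longrightarrow> f p \<in> B \<and> Q p (f p)" using ex by metis
  hence "inj_on f A" using unique by (intro inj_onI) metis
  thus ?thesis using f assms(1) by (intro card_inj_on_le) auto
qed

lemma card_teaching_swaps_at_ge:
  assumes m2: "m \<ge> 2" and sp: "swap_space n m X" and c: "complete_cpnet n m N"
    and ac: "acyclic_cpnet n N" and kb: "k_bounded n k N"
    and T: "teaching_set X (concept n m X N) (acyc_class n m k X) S"
    and v: "v < n" and Pa: "fst N v \<subseteq> P" and P: "P \<subseteq> {0..<n} - {v}"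
    and nd: "P \<inter> (cp_edges n N)\<^sup>+ `` {v} = {}" and cP: "card P \<le> k"
  shows "(m - 1) * m ^ card P \<le> card {x\<in>S. swap_at n m v x}"
proof -
  define D where "D = (P \<rightarrow>\<^sub>E {0..<m}) \<times> {1..<m}"
  define r where "r \<gamma> = snd N v (extend_context P \<gamma>)" for \<gamma>
  define Q where "Q p x \<longleftrightarrow> (\<forall>j\<in>P. snd x j = fst p j) \<and>
    {fst x v, snd x v} = {value_of_rank m (r (fst p)) (snd p), value_of_rank m (r (fst p)) (snd p - 1)}"
    for p x
  have "card D \<le> card {x\<in>S. swap_at n m v x}"
  proof (rule card_le_card_if_unique_witnesses[where Q = Q])
    show "finite {x\<in>S. swap_at n m v x}" using T unfolding teaching_set_def by simp
    show "\<exists>x\<in>{x\<in>S. swap_at n m v x}. Q p x" if "p \<in> D" for p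
    proof -
      have "\<forall>j\<in>P. fst p j < m" "0 < snd p" "snd p < m" using that unfolding D_def by (auto simp: PiE_iff)
      from teaching_set_swaps_adjacent_pair[OF m2 sp c ac kb T v Pa P nd cP this]
      obtain x where "x \<in> S" "swap_at n m v x" "Q p x" unfolding Q_def r_def by blast
      thus ?thesis by blast
    qed
    fix p p' x assume p: "p \<in> D" and p': "p' \<in> D" and Q: "Q p x" "Q p' x"
    have fst_eq: "fst p = fst p'"
    proof (rule PiE_ext)
      show "fst p \<in> P \<rightarrow>\<^sub>E {0..<m}" "fst p' \<in> P \<rightarrow>\<^sub>E {0..<m}" using p p' unfolding D_def by auto
      show "fst p j = fst p' j" if "j \<in> P" for j using Q that unfolding Q_def by simp
    qed
    have "strict_total_on {0..<m} (r (fst p))"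
      using p P m2 unfolding r_def D_def
      by (intro complete_cpnet_order[OF c v] outcome_extend_context) (auto simp: PiE_iff)
    moreover have "0 < snd p" "snd p < m" "0 < snd p'" "snd p' < m" using p p' unfolding D_def by auto
    moreover have "{value_of_rank m (r (fst p)) (snd p), value_of_rank m (r (fst p)) (snd p - 1)} =
        {value_of_rank m (r (fst p)) (snd p'), value_of_rank m (r (fst p)) (snd p' - 1)}"
      using Q unfolding Q_def fst_eq by simp
    ultimately have "snd p = snd p'" by (rule doubleton_value_of_rank_inject)
    thus "p = p'" using fst_eq by (simp add: prod_eq_iff)
  qed
  moreover have "finite P" using P finite_subset by blast
  hence "card D = m ^ card P * (m - 1)"
    unfolding D_def card_cartesian_product card_PiE[OF \<open>finite P\<close>] by simp
  ultimately show ?thesis by (simp add: mult.commute)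
qed

lemma card_teaching_set_ge:
  assumes m2: "m \<ge> 2" and sp: "swap_space n m X" and c: "complete_cpnet n m N"
    and ac: "acyclic_cpnet n N" and kb: "k_bounded n k N"
    and T: "teaching_set X (concept n m X N) (acyc_class n m k X) S"
  shows "(\<Sum>t<n. (m - 1) * m ^ min t k) \<le> card S"
proof -
  let ?r = "cp_edges n N"
  let ?ND = "\<lambda>v. {0..<n} - {v} - ?r\<^sup>+ `` {v}"
  have acy: "acyclic ?r" using ac unfolding acyclic_cpnet_def .
  have per_var: "(m - 1) * m ^ min (card (?ND v)) k \<le> card {x\<in>S. swap_at n m v x}" if v: "v < n" for v
  proof -
    have "(v, j) \<notin> ?r\<^sup>+" if "j \<in> fst N v" for j
      using that v acy trancl_into_trancl[of v j ?r v] unfolding acyclic_def cp_edges_def by auto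
    hence Pa: "fst N v \<subseteq> ?ND v" using complete_cpnet_parents[OF c v] by auto
    moreover have "card (fst N v) \<le> min (card (?ND v)) k"
      using card_mono[OF _ Pa] kb v unfolding k_bounded_def by simp
    ultimately obtain P where P: "fst N v \<subseteq> P" "P \<subseteq> ?ND v" "card P = min (card (?ND v)) k"
      using exists_subset_between[of "fst N v" "min (card (?ND v)) k" "?ND v"] by auto
    thus ?thesis using card_teaching_swaps_at_ge[OF m2 sp c ac kb T v P(1)] by auto
  qed
  have "mono (\<lambda>t. (m - 1) * m ^ min t k)"
    using m2 by (intro monoI mult_le_mono2 power_increasing) auto
  hence "(\<Sum>t<n. (m - 1) * m ^ min t k) \<le> (\<Sum>v\<in>{0..<n}. (m - 1) * m ^ min (card (?ND v)) k)"
    using sum_le_sum_card_nondescendants[OF _ _ cp_edges_subset[OF c] acy] by fastforce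
  also have "\<dots> \<le> (\<Sum>v\<in>{0..<n}. card {x\<in>S. swap_at n m v x})"
    using per_var by (intro sum_mono) auto
  also have "\<dots> = card (\<Union>v\<in>{0..<n}. {x\<in>S. swap_at n m v x})"
    using T swap_at_unique unfolding teaching_set_def by (intro card_UN_disjoint[symmetric]) auto
  also have "\<dots> \<le> card S"
    using T unfolding teaching_set_def by (intro card_mono) auto
  finally show ?thesis .
qed

section \<open>The upper bound\<close>

text \<open>A vector of a \<open>k\<close>-universal set has one entry in \<open>{1..m}\<close> for each variable other than
  \<open>v\<^sub>i\<close>, in increasing order of the variables; \<open>context_of n i s\<close> reads it as an outcome,
  shifting the values down by one and setting \<open>v\<^sub>i\<close> to \<open>0\<close>.\<close>

definition skip_index :: "nat \<Rightarrow> nat \<Rightarrow> nat" where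
  "skip_index i j = (if j < i then j else j - 1)"

definition context_of :: "nat \<Rightarrow> nat \<Rightarrow> nat list \<Rightarrow> nat \<Rightarrow> nat" where
  "context_of n i s = (\<lambda>j. if j < n \<and> j \<noteq> i then s ! skip_index i j - 1 else 0)"

lemma outcome_context_of:
  assumes "length s = n - 1" "set s \<subseteq> {1..m}" "i < n" "0 < m"
  shows "outcome n m (context_of n i s)"
  unfolding outcome_def
proof (intro conjI allI impI)
  fix j assume "j < n"
  show "context_of n i s j < m"
  proof (cases "j = i")
    case False
    hence "s ! skip_index i j \<in> set s"
      using \<open>j < n\<close> assms(1,3) unfolding skip_index_def by auto
    thus ?thesis using assms(2) False \<open>j < n\<close> unfolding context_of_def by fastforce
  qed (use assms(4) in \<open>simp add: context_of_def\<close>)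
qed (simp add: context_of_def)

lemma k_universal_obtain_context:
  assumes U: "k_universal n m k U" and "k \<le> n - 1" and i: "i < n"
    and Q: "Q \<subseteq> {0..<n} - {i}" and "card Q \<le> k" and q: "outcome n m q"
  obtains s where "s \<in> U" "\<forall>j\<in>Q. context_of n i s j = q j"
proof -
  define unskip where "unskip t = (if t < i then t else t + 1)" for t
  have "inj_on (skip_index i) ({0..<n} - {i})"
    unfolding inj_on_def skip_index_def by auto
  hence "card (skip_index i ` Q) = card Q" using Q by (intro card_image) (rule inj_on_subset)
  moreover have "skip_index i ` Q \<subseteq> {0..<n - 1}" using Q i unfolding skip_index_def by auto
  ultimately obtain I where I: "skip_index i ` Q \<subseteq> I" "I \<subseteq> {0..<n - 1}" "card I = k"
    using exists_subset_between[of "skip_index i ` Q" k "{0..<n - 1}"] assms(2,5) by auto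
  have "unskip t < n" if "t \<in> I" for t using I(2) that unfolding unskip_def by auto
  hence "\<forall>t\<in>I. q (unskip t) + 1 \<in> {1..m}" using q unfolding outcome_def by (simp add: Suc_leI)
  moreover have "\<And>J f. J \<subseteq> {0..<n - 1} \<Longrightarrow> card J = k \<Longrightarrow> \<forall>t\<in>J. f t \<in> {1..m} \<Longrightarrow>
      \<exists>s\<in>U. \<forall>t\<in>J. s ! t = f t"
    using U unfolding k_universal_def by simp
  ultimately have "\<exists>s\<in>U. \<forall>t\<in>I. s ! t = q (unskip t) + 1" using I(2,3) by simp
  then obtain s where s: "s \<in> U" "\<forall>t\<in>I. s ! t = q (unskip t) + 1" ..
  have "context_of n i s j = q j" if "j \<in> Q" for j
  proof -
    have "j < n" "j \<noteq> i" "skip_index i j \<in> I" using that Q I(1) by auto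
    moreover have "unskip (skip_index i j) = j"
      using \<open>j \<noteq> i\<close> unfolding skip_index_def unskip_def by auto
    ultimately show ?thesis using s(2) unfolding context_of_def by simp
  qed
  thus thesis using that s(1) by blast
qed

definition adjacent_example :: "((nat \<Rightarrow> nat) \<times> (nat \<Rightarrow> nat)) set \<Rightarrow> nat \<Rightarrow> nat \<Rightarrow> cpnet
    \<Rightarrow> nat \<Rightarrow> nat list \<Rightarrow> nat \<Rightarrow> (nat \<Rightarrow> nat) \<times> (nat \<Rightarrow> nat)" where
  "adjacent_example X n m N i s t =
     swap_example X (context_of n i s) i (value_of_rank m (snd N i (context_of n i s)) t)
       (value_of_rank m (snd N i (context_of n i s)) (t - 1))"

definition adjacent_examples :: "((nat \<Rightarrow> nat) \<times> (nat \<Rightarrow> nat)) set \<Rightarrow> nat \<Rightarrow> nat \<Rightarrow> cpnet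
    \<Rightarrow> nat list set \<Rightarrow> ((nat \<Rightarrow> nat) \<times> (nat \<Rightarrow> nat)) set" where
  "adjacent_examples X n m N U = (\<Union>i\<in>{0..<n}. \<Union>s\<in>U. adjacent_example X n m N i s ` {1..<m})"

lemma adjacent_example_facts:
  assumes m2: "m \<ge> 2" and sp: "swap_space n m X" and c: "complete_cpnet n m N"
    and s: "length s = n - 1" "set s \<subseteq> {1..m}" and i: "i < n" and t: "0 < t" "t < m"
  defines "w \<equiv> context_of n i s"
  defines "a \<equiv> value_of_rank m (snd N i w) t" and "b \<equiv> value_of_rank m (snd N i w) (t - 1)"
  shows "outcome n m w" "a < m" "b < m" "snd N i w a b" "a \<noteq> b"
    and "adjacent_example X n m N i s t = swap_example X w i a b"
proof -
  show w: "outcome n m w" unfolding w_def using m2 by (intro outcome_context_of[OF s i]) simp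
  have r: "strict_total_on {0..<m} (snd N i w)" by (rule complete_cpnet_order[OF c i w])
  show "a < m" "b < m" "snd N i w a b"
    unfolding a_def b_def using value_of_rank_less[OF r] value_of_rank_pref_pred[OF r t] t by auto
  thus "a \<noteq> b" using strict_total_on_irrefl[OF r] by auto
  show "adjacent_example X n m N i s t = swap_example X w i a b"
    unfolding adjacent_example_def w_def a_def b_def ..
qed

lemma adjacent_examples_subset:
  assumes m2: "m \<ge> 2" and sp: "swap_space n m X" and c: "complete_cpnet n m N"
    and U: "k_universal n m k U"
  shows "adjacent_examples X n m N U \<subseteq> X"
proof
  fix x assume "x \<in> adjacent_examples X n m N U"
  then obtain i s t where i: "i < n" and s: "s \<in> U" and t: "t \<in> {1..<m}"
    and x: "x = adjacent_example X n m N i s t"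
    unfolding adjacent_examples_def by auto
  have "length s = n - 1" "set s \<subseteq> {1..m}" "0 < t" "t < m" using U s t unfolding k_universal_def by auto
  note facts = adjacent_example_facts[OF m2 sp c this(1,2) i this(3,4)]
  show "x \<in> X" unfolding x facts(6) by (rule swap_example_mem[OF sp facts(1) i facts(2,3,5)])
qed

lemma card_adjacent_examples_le:
  assumes "finite U"
  shows "card (adjacent_examples X n m N U) \<le> n * (m - 1) * card U"
proof -
  have "card (adjacent_examples X n m N U) \<le> (\<Sum>i\<in>{0..<n}. \<Sum>s\<in>U. card (adjacent_example X n m N i s ` {1..<m}))"
    unfolding adjacent_examples_def using assms
    by (intro order_trans[OF card_UN_le] sum_mono card_UN_le) auto
  also have "\<dots> \<le> (\<Sum>i\<in>{0..<n}. \<Sum>s\<in>U. m - 1)"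
    by (intro sum_mono order_trans[OF card_image_le]) auto
  finally show ?thesis by (simp add: ac_simps)
qed

lemma pref_eq_if_agree_on_adjacent_examples:
  assumes m2: "m \<ge> 2" and sp: "swap_space n m X" and c: "complete_cpnet n m N" and ac: "acyclic_cpnet n N"
    and c': "complete_cpnet n m N'" and ac': "acyclic_cpnet n N'"
    and U: "k_universal n m k U" and s: "s \<in> U" and i: "i < n"
    and agree: "\<forall>x\<in>adjacent_examples X n m N U. concept n m X N' x = concept n m X N x"
    and "a < m" "b < m"
  shows "snd N' i (context_of n i s) a b = snd N i (context_of n i s) a b"
proof -
  define w where "w = context_of n i s"
  have sl: "length s = n - 1" "set s \<subseteq> {1..m}" using U s unfolding k_universal_def by auto
  have w: "outcome n m w" unfolding w_def using m2 by (intro outcome_context_of[OF sl i]) simp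
  have "snd N' i w (value_of_rank m (snd N i w) t) (value_of_rank m (snd N i w) (t - 1))"
    if t: "0 < t" "t < m" for t
  proof -
    note facts = adjacent_example_facts[OF m2 sp c sl i t, folded w_def]
    have "adjacent_example X n m N i s t \<in> adjacent_examples X n m N U"
      using i s t unfolding adjacent_examples_def by (intro UN_I imageI) auto
    hence "snd N' i w (value_of_rank m (snd N i w) t) (value_of_rank m (snd N i w) (t - 1)) =
        snd N i w (value_of_rank m (snd N i w) t) (value_of_rank m (snd N i w) (t - 1))"
      using agree facts(6) by (intro pref_eq_if_concept_eq_swap_example[OF m2 sp c ac c' ac' w i facts(2,3,5)]) auto
    thus ?thesis using facts(4) by simp
  qed
  thus ?thesis unfolding w_def[symmetric]
    using strict_total_on_eqI_adjacent[OF complete_cpnet_order[OF c i w] complete_cpnet_order[OF c' i w]] assms(11,12)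
    by blast
qed

lemma concept_eq_if_agree_on_adjacent_examples:
  assumes m2: "m \<ge> 2" and sp: "swap_space n m X" and c: "complete_cpnet n m N" and ac: "acyclic_cpnet n N"
    and U: "k_universal n m k U" and kn: "k \<le> n - 1"
    and c': "complete_cpnet n m N'" and ac': "acyclic_cpnet n N'" and kb': "k_bounded n k N'"
    and agree: "\<forall>x\<in>adjacent_examples X n m N U. concept n m X N' x = concept n m X N x"
    and parents: "\<And>i. i < n \<Longrightarrow> fst N i \<subseteq> fst N' i"
  shows "concept n m X N' = concept n m X N"
proof
  fix x
  show "concept n m X N' x = concept n m X N x"
  proof (cases "x \<in> X")
    case False
    thus ?thesis unfolding concept_def by simp
  next
    case True
    then obtain i where si: "swap_at n m i x" by (rule swap_space_obtain_swap_at[OF sp])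
    have i: "i < n" and x: "outcome n m (snd x)" and ab: "fst x i < m" "snd x i < m"
      using si unfolding swap_at_def outcome_def by auto
    obtain s where s: "s \<in> U" and ctx: "\<forall>l\<in>fst N' i. context_of n i s l = snd x l"
      using k_universal_obtain_context[OF U kn i complete_cpnet_parents[OF c' i] _ x] kb' i
      unfolding k_bounded_def by blast
    have w: "outcome n m (context_of n i s)"
      using U s m2 unfolding k_universal_def by (intro outcome_context_of[OF _ _ i]) auto
    have "snd N' i (snd x) (fst x i) (snd x i) = snd N' i (context_of n i s) (fst x i) (snd x i)"
      using complete_cpnet_local[OF c' i x w _ ab] ctx by simp
    also have "\<dots> = snd N i (context_of n i s) (fst x i) (snd x i)"
      by (rule pref_eq_if_agree_on_adjacent_examples[OF m2 sp c ac c' ac' U s i agree ab])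
    also have "\<dots> = snd N i (snd x) (fst x i) (snd x i)"
    proof (rule complete_cpnet_local[OF c i w x _ ab])
      show "\<forall>j\<in>fst N i. context_of n i s j = snd x j" using ctx parents[OF i] by blast
    qed
    finally show ?thesis using concept_swap_at[OF c' ac' m2 si] concept_swap_at[OF c ac m2 si] by simp
  qed
qed

text \<open>For an edge \<open>(v\<^sub>j, v\<^sub>i)\<close> take a universal context \<open>w\<close> matching a witness of the non-dummy
  parent \<open>v\<^sub>j\<close>; changing \<open>v\<^sub>j\<close> in \<open>w\<close> reverses some adjacent pair of the order at \<open>w\<close>, and the
  corresponding swap forces \<open>v\<^sub>j\<close> to be a parent of \<open>v\<^sub>i\<close> in every consistent CP-net.\<close>

lemma edge_witness:
  assumes m2: "m \<ge> 2" and sp: "swap_space n m X" and c: "complete_cpnet n m N" and ac: "acyclic_cpnet n N"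
    and kb: "k_bounded n k N" and U: "k_universal n m k U" and kn: "k \<le> n - 1"
    and e: "(j, i) \<in> cp_edges n N"
  shows "\<exists>y\<in>X. \<forall>N'. complete_cpnet n m N' \<and> acyclic_cpnet n N' \<and>
    (\<forall>x\<in>adjacent_examples X n m N U \<union> {y}. concept n m X N' x = concept n m X N x) \<longrightarrow> j \<in> fst N' i"
proof -
  have i: "i < n" and j: "j \<in> fst N i" using e unfolding cp_edges_def by auto
  obtain q p where q: "outcome n m q" and p: "outcome n m p" and qp: "\<forall>l\<in>fst N i - {j}. q l = p l"
    and differ: "\<exists>a<m. \<exists>b<m. snd N i q a b \<noteq> snd N i p a b"
    by (rule complete_cpnet_nondummy[OF c i j])
  obtain s where s: "s \<in> U" and ctx: "\<forall>l\<in>fst N i. context_of n i s l = q l"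
    using k_universal_obtain_context[OF U kn i complete_cpnet_parents[OF c i] _ q] kb i
    unfolding k_bounded_def by blast
  have sl: "length s = n - 1" "set s \<subseteq> {1..m}" using U s unfolding k_universal_def by auto
  define w where "w = context_of n i s"
  define w' where "w' = w(j := p j)"
  have w: "outcome n m w" unfolding w_def using m2 by (intro outcome_context_of[OF sl i]) simp
  have "j < n" using complete_cpnet_parents[OF c i] j by auto
  moreover have "p j < m" using p \<open>j < n\<close> unfolding outcome_def by simp
  ultimately have w': "outcome n m w'" unfolding w'_def by (rule outcome_fun_upd[OF w])
  have "snd N i w a b = snd N i q a b" if "a < m" "b < m" for a b
    using complete_cpnet_local[OF c i w q _ that] ctx unfolding w_def by simp
  moreover have "snd N i w' a b = snd N i p a b" if "a < m" "b < m" for a b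
    using complete_cpnet_local[OF c i w' p _ that] ctx qp unfolding w'_def w_def by auto
  ultimately obtain t where t: "0 < t" "t < m"
    and flipped: "\<not> snd N i w' (value_of_rank m (snd N i w) t) (value_of_rank m (snd N i w) (t - 1))"
    using strict_total_on_eqI_adjacent[OF complete_cpnet_order[OF c i w] complete_cpnet_order[OF c i w']]
      differ by metis
  define a where "a = value_of_rank m (snd N i w) t"
  define b where "b = value_of_rank m (snd N i w) (t - 1)"
  note facts = adjacent_example_facts[OF m2 sp c sl i t, folded w_def, folded a_def b_def]
  have "adjacent_example X n m N i s t \<in> adjacent_examples X n m N U"
    using i s t unfolding adjacent_examples_def by (intro UN_I imageI) auto
  moreover have "j \<in> fst N' i"
    if c': "complete_cpnet n m N'" and ac': "acyclic_cpnet n N'"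
      and agree: "\<forall>x\<in>adjacent_examples X n m N U \<union> {swap_example X w' i a b}.
        concept n m X N' x = concept n m X N x"
      for N'
  proof (rule ccontr)
    assume "j \<notin> fst N' i"
    hence "snd N' i w a b = snd N' i w' a b"
      using complete_cpnet_local[OF c' i w w' _ facts(2,3)] unfolding w'_def by auto
    also have "\<dots> = snd N i w' a b"
      using agree by (intro pref_eq_if_concept_eq_swap_example[OF m2 sp c ac c' ac' w' i facts(2,3,5)]) simp
    also have "snd N' i w a b = snd N i w a b"
      using agree \<open>adjacent_example X n m N i s t \<in> adjacent_examples X n m N U\<close> facts(6)
      by (intro pref_eq_if_concept_eq_swap_example[OF m2 sp c ac c' ac' w i facts(2,3,5)]) auto
    ultimately show False using facts(4) flipped unfolding a_def b_def by simp
  qed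
  ultimately show ?thesis using swap_example_mem[OF sp w' i facts(2,3,5)] by blast
qed

lemma obtain_teaching_set:
  assumes m2: "m \<ge> 2" and kn: "k \<le> n - 1" and sp: "swap_space n m X" and c: "complete_cpnet n m N"
    and ac: "acyclic_cpnet n N" and kb: "k_bounded n k N" and U: "k_universal n m k U" and "finite U"
  obtains S where "teaching_set X (concept n m X N) (acyc_class n m k X) S"
    "card S \<le> card (cp_edges n N) + n * (m - 1) * card U"
proof -
  let ?A = "adjacent_examples X n m N U"
  have "\<exists>y. y \<in> X \<and> (\<forall>N'. complete_cpnet n m N' \<and> acyclic_cpnet n N' \<and>
      (\<forall>x\<in>?A \<union> {y}. concept n m X N' x = concept n m X N x) \<longrightarrow> fst e \<in> fst N' (snd e))"
    if "e \<in> cp_edges n N" for e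
  proof -
    obtain j i where e: "e = (j, i)" by (cases e)
    show ?thesis using edge_witness[OF m2 sp c ac kb U kn that[unfolded e]] unfolding e fst_conv snd_conv by blast
  qed
  from bchoice[OF ballI[OF this]] obtain f where f: "\<forall>e\<in>cp_edges n N. f e \<in> X \<and> (\<forall>N'. complete_cpnet n m N' \<and>
      acyclic_cpnet n N' \<and> (\<forall>x\<in>?A \<union> {f e}. concept n m X N' x = concept n m X N x) \<longrightarrow> fst e \<in> fst N' (snd e))" ..
  define S where "S = ?A \<union> f ` cp_edges n N"
  have fin_edges: "finite (cp_edges n N)"
    using finite_subset[OF cp_edges_subset[OF c]] by simp
  have "teaching_set X (concept n m X N) (acyc_class n m k X) S"
    unfolding teaching_set_def
  proof (intro conjI ballI impI)
    show "S \<subseteq> X" using adjacent_examples_subset[OF m2 sp c U] f unfolding S_def by blast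
    show "finite S" using \<open>finite U\<close> fin_edges unfolding S_def adjacent_examples_def by simp
    fix c' assume "c' \<in> acyc_class n m k X" and agree: "\<forall>x\<in>S. c' x = concept n m X N x"
    then obtain N' where N': "c' = concept n m X N'" "complete_cpnet n m N'" "acyclic_cpnet n N'"
      "k_bounded n k N'" unfolding acyc_class_def by blast
    have "fst N i \<subseteq> fst N' i" if "i < n" for i
    proof
      fix j assume "j \<in> fst N i"
      hence "(j, i) \<in> cp_edges n N" using that unfolding cp_edges_def by simp
      thus "j \<in> fst N' i" using f N' agree unfolding S_def by fastforce
    qed
    moreover have "\<forall>x\<in>?A. concept n m X N' x = concept n m X N x" using agree N'(1) unfolding S_def by simp
    ultimately show "c' = concept n m X N" unfolding N'(1)
      by (rule concept_eq_if_agree_on_adjacent_examples[OF m2 sp c ac U kn N'(2-4), rotated])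
  qed
  moreover have "card S \<le> card (cp_edges n N) + n * (m - 1) * card U"
    using card_Un_le[of ?A "f ` cp_edges n N"] card_image_le[OF fin_edges, of f]
      card_adjacent_examples_le[OF \<open>finite U\<close>, of X n m N] unfolding S_def by linarith
  ultimately show thesis by (rule that)
qed

lemma M_k_eq_sum:
  assumes "k \<le> n" and "m \<ge> 2"
  shows "M_k n m k = (\<Sum>t<n. real m ^ min t k)"
proof -
  have "(\<Sum>t<n. real m ^ min t k) = (\<Sum>t<k. real m ^ min t k) + (\<Sum>t\<in>{k..<n}. real m ^ min t k)"
    using assms(1) by (metis sum.atLeastLessThan_concat lessThan_atLeast0 zero_le)
  also have "\<dots> = (\<Sum>t<k. real m ^ t) + (\<Sum>t\<in>{k..<n}. real m ^ k)"
    by (intro arg_cong2[where f = "(+)"] sum.cong) auto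
  also have "(\<Sum>t<k. real m ^ t) = (real m ^ k - 1) / (real m - 1)"
    using assms(2) by (intro geometric_sum) simp
  finally show ?thesis unfolding M_k_def by simp
qed

lemma TD_le_card: "teaching_set X c C S \<Longrightarrow> TD X c C \<le> card S"
  unfolding TD_def by (intro Least_le) blast

lemma TD_attained:
  assumes "teaching_set X c C S"
  obtains S0 where "teaching_set X c C S0" "card S0 = TD X c C"
  using LeastI_ex[of "\<lambda>t. \<exists>S. teaching_set X c C S \<and> card S = t"] assms
  unfolding TD_def by blast

lemma U_k_attained:
  assumes "m \<ge> 1"
  obtains U where "finite U" "k_universal n m k U" "card U = U_k n m k"
proof -
  define A where "A = {s. set s \<subseteq> {1..m} \<and> length s = n - 1}"
  have "finite A" unfolding A_def by (rule finite_lists_length_eq) simp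
  moreover have "k_universal n m k A" unfolding k_universal_def
  proof (intro conjI ballI allI impI)
    fix I v assume I: "I \<subseteq> {0..<n-1}" and v: "\<forall>i\<in>I. v i \<in> {1..m}"
    define s where "s = map (\<lambda>t. if t \<in> I then v t else 1) [0..<n-1]"
    have "s \<in> A" unfolding A_def s_def using v assms by auto
    moreover have "\<forall>i\<in>I. s ! i = v i" unfolding s_def using I by auto
    ultimately show "\<exists>s\<in>A. \<forall>i\<in>I. s ! i = v i" by blast
  qed (auto simp: A_def)
  ultimately show ?thesis
    using LeastI_ex[of "\<lambda>t. \<exists>S. finite S \<and> k_universal n m k S \<and> card S = t"] that
    unfolding U_k_def by blast
qed

theorem lemma10:
  fixes n m k :: nat and X :: "((nat \<Rightarrow> nat) \<times> (nat \<Rightarrow> nat)) set" and N :: cpnet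
  assumes "n \<ge> 1" and "m \<ge> 2" and "k \<le> n - 1"
    and "swap_space n m X"
    and "complete_cpnet n m N" and "acyclic_cpnet n N" and "k_bounded n k N"
  shows "real (m - 1) * M_k n m k \<le> real (TD X (concept n m X N) (acyc_class n m k X))
    \<and> TD X (concept n m X N) (acyc_class n m k X)
        \<le> card (cp_edges n N) + n * (m - 1) * U_k n m k"
proof
  obtain U where U: "finite U" "k_universal n m k U" "card U = U_k n m k"
    using U_k_attained assms(2) by (metis Suc_1 Suc_leD)
  obtain S where S: "teaching_set X (concept n m X N) (acyc_class n m k X) S"
    and card_S: "card S \<le> card (cp_edges n N) + n * (m - 1) * card U"
    by (rule obtain_teaching_set[OF assms(2,3,4,5,6,7) U(2,1)])
  show "TD X (concept n m X N) (acyc_class n m k X) \<le> card (cp_edges n N) + n * (m - 1) * U_k n m k"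
    using TD_le_card[OF S] card_S U(3) by simp
  obtain S0 where S0: "teaching_set X (concept n m X N) (acyc_class n m k X) S0"
    and card_S0: "card S0 = TD X (concept n m X N) (acyc_class n m k X)"
    using TD_attained[OF S] by blast
  have "real (m - 1) * M_k n m k = real (\<Sum>t<n. (m - 1) * m ^ min t k)"
    using assms(1-3) by (simp add: M_k_eq_sum sum_distrib_left)
  also have "\<dots> \<le> real (card S0)"
    using card_teaching_set_ge[OF assms(2,4,5,6,7) S0] by linarith
  finally show "real (m - 1) * M_k n m k \<le> real (TD X (concept n m X N) (acyc_class n m k X))"
    using card_S0 by simp
qed

end
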